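(* Let $G$ be a simple graph with $n$ vertices $v_1,\dots,v_n$ and $m\ge1$ edges, where $d_i$ is the degree of $v_i$. Then $$\mathcal E(G)\ge\frac{2m}{\sqrt{\max_{1\le i\le n}\sum_{j:\,v_i\sim v_j}d_j}}.$$
   Context: The adjacency matrix of $G$ is $\mathrm{Adj}(G)=[a_{ij}]$ with $a_{ij}=1$ if $v_i$ is adjacent to $v_j$ (written $v_i\sim v_j$) and $0$ otherwise. If $\lambda_1(G),\dots,\lambda_n(G)$ are the eigenvalues of $\mathrm{Adj}(G)$, the energy of $G$ is $\mathcal E(G)=\sum_{i=1}^n|\lambda_i(G)|$. *)

theory Defs
  imports "Jordan_Normal_Form.Char_Poly"
begin

definition simple_graph :: "nat \<Rightarrow> (nat \<Rightarrow> nat \<Rightarrow> bool) \<Rightarrow> bool" where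
  "simple_graph n E \<longleftrightarrow> (\<forall>i<n. \<forall>j<n. E i j \<longleftrightarrow> E j i) \<and> (\<forall>i<n. \<not> E i i)"

definition num_edges :: "nat \<Rightarrow> (nat \<Rightarrow> nat \<Rightarrow> bool) \<Rightarrow> nat" where
  "num_edges n E = card {(i, j). i < j \<and> j < n \<and> E i j}"

definition vdeg :: "nat \<Rightarrow> (nat \<Rightarrow> nat \<Rightarrow> bool) \<Rightarrow> nat \<Rightarrow> nat" where
  "vdeg n E i = card {j. j < n \<and> E i j}"

definition adj_mat :: "nat \<Rightarrow> (nat \<Rightarrow> nat \<Rightarrow> bool) \<Rightarrow> real mat" where
  "adj_mat n E = mat n n (\<lambda>(i, j). if E i j then 1 else 0)"

definition eigenvalues_mset :: "real mat \<Rightarrow> complex multiset" where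
  "eigenvalues_mset A = proots (char_poly (map_mat complex_of_real A))"

definition graph_energy :: "nat \<Rightarrow> (nat \<Rightarrow> nat \<Rightarrow> bool) \<Rightarrow> real" where
  "graph_energy n E = sum_mset (image_mset cmod (eigenvalues_mset (adj_mat n E)))"

end

theory Submission
  imports Defs "Jordan_Normal_Form.Schur_Decomposition"
begin

(* Every eigenvalue \<lambda> of the adjacency matrix A satisfies |\<lambda>|^2 <= M, the maximum
   of the neighbour degree sums: \<lambda>^2 is an eigenvalue of A^2, the i-th row of A^2 sums to
   \<Sum>{d_j | v_j ~ v_i}, and an eigenvalue is bounded by the largest absolute row sum.
   On the other hand \<Sum> \<lambda>^2 = tr A^2 = \<Sum> d_i = 2m, so
   2m <= \<Sum> |\<lambda>|^2 <= sqrt M * \<Sum> |\<lambda>| = sqrt M * E(G). *)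

definition trace :: "'a::comm_ring_1 mat \<Rightarrow> 'a" where
  "trace A = (\<Sum>i<dim_row A. A $$ (i, i))"

lemma trace_mult_comm:
  fixes A B :: "'a::comm_ring_1 mat"
  assumes "A \<in> carrier_mat n m" and "B \<in> carrier_mat m n"
  shows "trace (A * B) = trace (B * A)"
proof -
  have "trace (A * B) = (\<Sum>i<n. \<Sum>k<m. A $$ (i, k) * B $$ (k, i))"
    using assms by (auto simp: trace_def scalar_prod_def atLeast0LessThan intro: sum.cong)
  also have "\<dots> = (\<Sum>k<m. \<Sum>i<n. B $$ (k, i) * A $$ (i, k))"
    by (subst sum.swap) (simp add: mult.commute)
  also have "\<dots> = trace (B * A)"
    using assms by (auto simp: trace_def scalar_prod_def atLeast0LessThan intro: sum.cong)
  finally show ?thesis .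
qed

lemma trace_similar_mat_wit:
  assumes "A \<in> carrier_mat n n" and "similar_mat_wit A B P Q"
  shows "trace A = trace B"
proof -
  note wit = similar_mat_witD2[OF assms]
  have "trace A = trace (P * B * Q)"
    using wit by simp
  also have "\<dots> = trace (Q * (P * B))"
    using wit by (intro trace_mult_comm) auto
  also have "Q * (P * B) = Q * P * B"
    using wit by (intro assoc_mult_mat[symmetric]) auto
  also have "\<dots> = B"
    using wit by simp
  finally show ?thesis .
qed

lemma (in comm_ring_hom) trace_mat_hom:
  assumes "A \<in> carrier_mat n n"
  shows "trace (mat\<^sub>h A) = hom (trace A)"
  using assms by (simp add: trace_def hom_sum)

lemma diag_mult_upper_triangular:
  fixes A B :: "'a::comm_ring_1 mat"
  assumes "A \<in> carrier_mat n n" "B \<in> carrier_mat n n"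
    and "upper_triangular A" "upper_triangular B" and "i < n"
  shows "(A * B) $$ (i, i) = A $$ (i, i) * B $$ (i, i)"
proof -
  have "(A * B) $$ (i, i) = (\<Sum>k<n. A $$ (i, k) * B $$ (k, i))"
    using assms by (simp add: scalar_prod_def atLeast0LessThan)
  also have "\<dots> = (\<Sum>k\<in>{i}. A $$ (i, k) * B $$ (k, i))"
  proof (intro sum.mono_neutral_right ballI)
    fix k assume "k \<in> {..<n} - {i}"
    then show "A $$ (i, k) * B $$ (k, i) = 0"
      using assms upper_triangularD[of A k i] upper_triangularD[of B i k]
      by (cases "k < i") auto
  qed (use assms in auto)
  finally show ?thesis by simp
qed

lemma proots_prod_linear_factors:
  "proots (\<Prod>a\<leftarrow>as. [:- a, 1:]) = mset (as :: 'a::idom list)"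
proof (induction as)
  case (Cons a as)
  have "(\<Prod>a\<leftarrow>as. [:- a, 1:]) \<noteq> 0"
    by (auto simp: prod_list_zero_iff)
  with Cons show ?case
    by (simp add: proots_mult del: mult_pCons_left)
qed simp

lemma sum_mset_proots_char_poly_square:
  fixes A :: "complex mat"
  assumes A: "A \<in> carrier_mat n n"
  shows "(\<Sum>a\<in>#proots (char_poly A). a\<^sup>2) = trace (A * A)"
proof -
  \<comment> \<open>Schur triangularisation: the diagonal of B lists the eigenvalues,
    that of B * B their squares.\<close>
  obtain es where es: "char_poly A = (\<Prod>a\<leftarrow>es. [:- a, 1:])"
    using char_poly_factorized[OF A] by blast
  obtain B P Q where "schur_decomposition A es = (B, P, Q)"
    by (cases "schur_decomposition A es")
  from schur_decomposition[OF A es this]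
  have wit: "similar_mat_wit A B P Q" and ut: "upper_triangular B" and diag: "diag_mat B = es"
    by auto
  have B: "B \<in> carrier_mat n n"
    using similar_mat_witD2[OF A wit] by simp
  have "(\<Sum>a\<in>#proots (char_poly A). a\<^sup>2) = (\<Sum>i<n. (B $$ (i, i))\<^sup>2)"
    using B unfolding es proots_prod_linear_factors diag[symmetric]
    by (simp add: diag_mat_def multiset.map_comp o_def sum_unfold_sum_mset atLeast0LessThan)
  also have "\<dots> = (\<Sum>i<n. (B * B) $$ (i, i))"
    using diag_mult_upper_triangular[OF B B ut ut] by (simp add: power2_eq_square)
  also have "\<dots> = trace (B * B)"
    using B by (simp add: trace_def)
  also have "\<dots> = trace (A * A)"
    using trace_similar_mat_wit[OF _ similar_mat_wit_pow[OF wit, of 2], of n] A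
    by (simp add: numeral_2_eq_2)
  finally show ?thesis .
qed

lemma in_proots_char_poly_iff_eigenvalue:
  fixes A :: "'a::field mat"
  assumes A: "A \<in> carrier_mat n n"
  shows "x \<in># proots (char_poly A) \<longleftrightarrow> eigenvalue A x"
proof -
  have "char_poly A \<noteq> 0"
    using degree_monic_char_poly[OF A] by auto
  then show ?thesis
    by (simp add: eigenvalue_root_char_poly[OF A])
qed

lemma eigenvalue_pow_mat:
  assumes "A \<in> carrier_mat n n" and "eigenvalue A a"
  shows "eigenvalue (A ^\<^sub>m k) (a ^ k)"
  using assms eigenvector_pow[OF assms(1)] unfolding eigenvalue_def eigenvector_def by auto

lemma eigenvalue_norm_le_row_sum:
  fixes A :: "'a::real_normed_field mat"
  assumes A: "A \<in> carrier_mat n n" and "eigenvalue A a"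
  shows "\<exists>i<n. norm a \<le> (\<Sum>j<n. norm (A $$ (i, j)))"
proof -
  obtain v where v: "v \<in> carrier_vec n" "v \<noteq> 0\<^sub>v n" "A *\<^sub>v v = a \<cdot>\<^sub>v v"
    using assms unfolding eigenvalue_def eigenvector_def by auto
  \<comment> \<open>Read off the eigenvector equation at a coordinate of maximal modulus.\<close>
  let ?N = "\<lambda>j. norm (v $ j)"
  have "{..<n} \<noteq> {}"
    using v(1,2) by (auto intro!: eq_vecI)
  then have "Max (?N ` {..<n}) \<in> ?N ` {..<n}"
    by (intro Max_in) auto
  then obtain i where i: "i < n" and i_max: "?N i = Max (?N ` {..<n})"
    by auto
  have max: "?N j \<le> ?N i" if "j < n" for j
    using that by (simp add: i_max)
  have "?N i \<noteq> 0"
  proof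
    assume "?N i = 0"
    then have "v = 0\<^sub>v n"
      using v(1) max by (intro eq_vecI) fastforce+
    with v(2) show False ..
  qed
  then have Ni_pos: "?N i > 0"
    by simp
  have "a * v $ i = (\<Sum>j<n. A $$ (i, j) * v $ j)"
    using arg_cong[OF v(3), of "\<lambda>w. w $ i"] A v(1) i
    by (simp add: scalar_prod_def atLeast0LessThan mult.commute)
  then have "norm a * ?N i = norm (\<Sum>j<n. A $$ (i, j) * v $ j)"
    by (simp flip: norm_mult)
  also have "\<dots> \<le> (\<Sum>j<n. norm (A $$ (i, j)) * ?N j)"
    by (rule order_trans[OF norm_sum]) (simp add: norm_mult)
  also have "\<dots> \<le> (\<Sum>j<n. norm (A $$ (i, j)) * ?N i)"
    by (intro sum_mono mult_left_mono max) auto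
  finally have "norm a * ?N i \<le> (\<Sum>j<n. norm (A $$ (i, j))) * ?N i"
    by (simp add: sum_distrib_right)
  with Ni_pos i show ?thesis
    by auto
qed

lemma norm_sum_mset_le:
  fixes f :: "'a \<Rightarrow> 'b::real_normed_vector"
  shows "norm (\<Sum>x\<in>#X. f x) \<le> (\<Sum>x\<in>#X. norm (f x))"
  by (induction X) (auto intro: order_trans[OF norm_triangle_ineq])

lemma norm_sum_mset_squares_div_sqrt_le:
  fixes X :: "'a::real_normed_div_algebra multiset"
  assumes bound: "\<And>x. x \<in># X \<Longrightarrow> norm x ^ 2 \<le> M"
  shows "norm (\<Sum>x\<in>#X. x\<^sup>2) / sqrt M \<le> (\<Sum>x\<in>#X. norm x)"
proof (cases "sqrt M > 0")
  case True
  have "norm (\<Sum>x\<in>#X. x\<^sup>2) \<le> (\<Sum>x\<in>#X. norm x * norm x)"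
    using norm_sum_mset_le[of power2 X] by (simp add: norm_mult power2_eq_square)
  also have "\<dots> \<le> (\<Sum>x\<in>#X. sqrt M * norm x)"
    using bound by (intro sum_mset_mono mult_right_mono real_le_rsqrt) auto
  also have "\<dots> = sqrt M * (\<Sum>x\<in>#X. norm x)"
    by (simp add: sum_mset_distrib_left multiset.map_comp o_def)
  finally show ?thesis
    using True by (simp add: pos_divide_le_eq mult.commute)
next
  case False
  then have "norm (\<Sum>x\<in>#X. x\<^sup>2) / sqrt M \<le> 0"
    by (simp add: divide_nonneg_nonpos)
  also have "0 \<le> (\<Sum>x\<in>#X. norm x)"
    by (induction X) auto
  finally show ?thesis .
qed

lemma adj_mat_dim [simp]: "dim_row (adj_mat n E) = n" "dim_col (adj_mat n E) = n"
  by (simp_all add: adj_mat_def)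

lemma adj_mat_carrier [simp]: "adj_mat n E \<in> carrier_mat n n"
  by (simp add: carrier_matI)

lemma index_adj_mat:
  "i < n \<Longrightarrow> j < n \<Longrightarrow> adj_mat n E $$ (i, j) = (if E i j then 1 else 0)"
  by (simp add: adj_mat_def)

lemma sum_adj_mat_row:
  assumes "i < n"
  shows "(\<Sum>j<n. adj_mat n E $$ (i, j) * f j) = (\<Sum>j\<in>{j. j < n \<and> E i j}. f j)"
proof -
  have "(\<Sum>j<n. adj_mat n E $$ (i, j) * f j) = (\<Sum>j<n. if E i j then f j else 0)"
    using assms by (intro sum.cong) (auto simp: index_adj_mat)
  also have "\<dots> = (\<Sum>j\<in>{j\<in>{..<n}. E i j}. f j)"
    by (rule sum.inter_filter[OF finite_lessThan, symmetric])
  also have "{j\<in>{..<n}. E i j} = {j. j < n \<and> E i j}"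
    by auto
  finally show ?thesis .
qed

lemma row_sum_adj_mat:
  assumes "i < n"
  shows "(\<Sum>j<n. adj_mat n E $$ (i, j)) = real (vdeg n E i)"
  using sum_adj_mat_row[OF assms, of E "\<lambda>_. 1"] by (simp add: vdeg_def)

lemma index_adj_mat_square:
  assumes "i < n" and "k < n"
  shows "(adj_mat n E * adj_mat n E) $$ (i, k)
    = (\<Sum>j<n. adj_mat n E $$ (i, j) * adj_mat n E $$ (j, k))"
  using assms by (simp add: scalar_prod_def atLeast0LessThan)

lemma adj_mat_square_nonneg:
  assumes "i < n" and "k < n"
  shows "(adj_mat n E * adj_mat n E) $$ (i, k) \<ge> 0"
  using assms by (subst index_adj_mat_square) (auto simp: index_adj_mat intro!: sum_nonneg)

lemma row_sum_adj_mat_square: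
  assumes "i < n"
  shows "(\<Sum>k<n. (adj_mat n E * adj_mat n E) $$ (i, k))
    = real (\<Sum>j\<in>{j. j < n \<and> E i j}. vdeg n E j)"
proof -
  have "(\<Sum>k<n. (adj_mat n E * adj_mat n E) $$ (i, k))
      = (\<Sum>k<n. \<Sum>j<n. adj_mat n E $$ (i, j) * adj_mat n E $$ (j, k))"
    using assms index_adj_mat_square by (intro sum.cong) auto
  also have "\<dots> = (\<Sum>j<n. adj_mat n E $$ (i, j) * (\<Sum>k<n. adj_mat n E $$ (j, k)))"
    by (subst sum.swap) (simp add: sum_distrib_left)
  also have "\<dots> = (\<Sum>j<n. adj_mat n E $$ (i, j) * real (vdeg n E j))"
    by (intro sum.cong refl) (simp add: row_sum_adj_mat)
  also have "\<dots> = real (\<Sum>j\<in>{j. j < n \<and> E i j}. vdeg n E j)"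
    using assms by (simp add: sum_adj_mat_row)
  finally show ?thesis .
qed

lemma sum_vdeg_eq_twice_num_edges:
  assumes "simple_graph n E"
  shows "(\<Sum>i<n. vdeg n E i) = 2 * num_edges n E"
proof -
  define S where "S = {(i, j). i < j \<and> j < n \<and> E i j}"
  have "finite S"
    by (rule finite_subset[of _ "{..<n} \<times> {..<n}"]) (auto simp: S_def)
  have "(\<Sum>i<n. vdeg n E i) = card (SIGMA i:{..<n}. {j. j < n \<and> E i j})"
    by (subst card_SigmaI) (auto simp: vdeg_def)
  also have "(SIGMA i:{..<n}. {j. j < n \<and> E i j}) = S \<union> prod.swap ` S"
    using assms unfolding simple_graph_def S_def by (auto simp: image_iff) (metis linorder_neqE_nat)
  also have "card (S \<union> prod.swap ` S) = card S + card (prod.swap ` S)"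
    using \<open>finite S\<close> by (intro card_Un_disjoint) (auto simp: S_def)
  also have "card (prod.swap ` S) = card S"
    by (simp add: card_image)
  finally show ?thesis
    by (simp add: num_edges_def S_def)
qed

lemma trace_adj_mat_square:
  assumes "simple_graph n E"
  shows "trace (adj_mat n E * adj_mat n E) = real (2 * num_edges n E)"
proof -
  have "(adj_mat n E * adj_mat n E) $$ (i, i) = real (vdeg n E i)" if "i < n" for i
  proof -
    have "(adj_mat n E * adj_mat n E) $$ (i, i)
        = (\<Sum>j\<in>{j. j < n \<and> E i j}. adj_mat n E $$ (j, i))"
      by (subst index_adj_mat_square[OF that that]) (rule sum_adj_mat_row[OF that])
    also have "\<dots> = (\<Sum>j\<in>{j. j < n \<and> E i j}. 1)"
      using assms that by (intro sum.cong) (auto simp: index_adj_mat simple_graph_def)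
    finally show ?thesis
      by (simp add: vdeg_def)
  qed
  then show ?thesis
    by (simp add: trace_def sum_vdeg_eq_twice_num_edges[OF assms, symmetric])
qed

lemma eigenvalue_adj_mat_norm_square_le:
  assumes "eigenvalue (map_mat complex_of_real (adj_mat n E)) a"
  shows "\<exists>i<n. cmod a ^ 2 \<le> real (\<Sum>j\<in>{j. j < n \<and> E i j}. vdeg n E j)"
proof -
  let ?A = "adj_mat n E"
  let ?C = "map_mat complex_of_real ?A"
  have "?C ^\<^sub>m 2 = map_mat complex_of_real (?A * ?A)"
    by (simp add: numeral_2_eq_2 of_real_hom.mat_hom_mult[OF adj_mat_carrier adj_mat_carrier])
  then have "eigenvalue (map_mat complex_of_real (?A * ?A)) (a ^ 2)"
    using eigenvalue_pow_mat[OF _ assms, of n 2] by simp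
  then obtain i where i: "i < n"
    and bound: "cmod (a ^ 2) \<le> (\<Sum>k<n. cmod (map_mat complex_of_real (?A * ?A) $$ (i, k)))"
    using eigenvalue_norm_le_row_sum[of _ n]
    by (metis adj_mat_carrier map_carrier_mat mult_carrier_mat)
  have "cmod a ^ 2 = cmod (a ^ 2)"
    by (simp add: norm_power)
  also note bound
  also have "(\<Sum>k<n. cmod (map_mat complex_of_real (?A * ?A) $$ (i, k)))
      = (\<Sum>k<n. (?A * ?A) $$ (i, k))"
    using i adj_mat_square_nonneg by (intro sum.cong) auto
  also have "\<dots> = real (\<Sum>j\<in>{j. j < n \<and> E i j}. vdeg n E j)"
    by (rule row_sum_adj_mat_square[OF i])
  finally show ?thesis
    using i by blast
qed

lemma sum_mset_eigenvalues_square_adj_mat: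
  assumes "simple_graph n E"
  shows "(\<Sum>x\<in>#eigenvalues_mset (adj_mat n E). x\<^sup>2) = of_nat (2 * num_edges n E)"
proof -
  have "(\<Sum>x\<in>#eigenvalues_mset (adj_mat n E). x\<^sup>2)
      = trace (map_mat complex_of_real (adj_mat n E) * map_mat complex_of_real (adj_mat n E))"
    unfolding eigenvalues_mset_def by (simp add: sum_mset_proots_char_poly_square[of _ n])
  also have "\<dots> = of_real (trace (adj_mat n E * adj_mat n E))"
    by (simp flip: of_real_hom.mat_hom_mult[OF adj_mat_carrier adj_mat_carrier]
        add: of_real_hom.trace_mat_hom[OF mult_carrier_mat[OF adj_mat_carrier adj_mat_carrier]])
  also have "\<dots> = of_nat (2 * num_edges n E)"
    by (simp add: trace_adj_mat_square[OF assms])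
  finally show ?thesis .
qed

lemma eigenvalues_mset_adj_mat_norm_square_le:
  assumes "x \<in># eigenvalues_mset (adj_mat n E)"
  shows "\<exists>i<n. cmod x ^ 2 \<le> real (\<Sum>j\<in>{j. j < n \<and> E i j}. vdeg n E j)"
proof (rule eigenvalue_adj_mat_norm_square_le)
  show "eigenvalue (map_mat complex_of_real (adj_mat n E)) x"
    using assms in_proots_char_poly_iff_eigenvalue[of "map_mat complex_of_real (adj_mat n E)" n]
    unfolding eigenvalues_mset_def by simp
qed

theorem theorem5p1:
  fixes n :: nat and E :: "nat \<Rightarrow> nat \<Rightarrow> bool"
  assumes "simple_graph n E"
    and "num_edges n E \<ge> 1"
  shows "graph_energy n E \<ge>
    2 * real (num_edges n E) /
      sqrt (Max {real (\<Sum>j\<in>{j. j < n \<and> E i j}. vdeg n E j) | i. i < n})"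
proof -
  let ?M = "Max {real (\<Sum>j\<in>{j. j < n \<and> E i j}. vdeg n E j) | i. i < n}"
  have eigenvalue_bound: "cmod x ^ 2 \<le> ?M" if x: "x \<in># eigenvalues_mset (adj_mat n E)" for x
  proof -
    obtain i where i: "i < n"
      and x_le: "cmod x ^ 2 \<le> real (\<Sum>j\<in>{j. j < n \<and> E i j}. vdeg n E j)"
      using eigenvalues_mset_adj_mat_norm_square_le[OF x] by blast
    have "real (\<Sum>j\<in>{j. j < n \<and> E i j}. vdeg n E j) \<le> ?M"
      using i by (intro Max_ge) auto
    with x_le show ?thesis
      by linarith
  qed
  from norm_sum_mset_squares_div_sqrt_le[of "eigenvalues_mset (adj_mat n E)", OF eigenvalue_bound]
  show ?thesis
    by (simp add: graph_energy_def sum_mset_eigenvalues_square_adj_mat[OF assms(1)])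
qed

end
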